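(* Let $k>0$ and let $U:(0,1)\to(0,\infty)$ be any function with $U(c)\ge\sigma(c)$ for all $c\in(0,1)$. Then for all $c\in(0,1)$, $$\frac{2k}{U(1-c)}\le L_2(c)\le\sigma(c).$$ In particular, with $U=U_1$, where $U_1(c)=-2\Phi^{-1}\!\left(\frac{1-c}{1+e^k}\right)$, this gives $-k\big/\Phi^{-1}\!\left(\frac{c}{1+e^k}\right)\le L_2(c)$.
   Context: Let $\Phi$ denote the standard normal distribution function. For $\sigma>0$ put $d_1(\sigma)=-k/\sigma+\sigma/2$, $d_2(\sigma)=-k/\sigma-\sigma/2$, and $C_{\mathrm{BS}}(\sigma)=\Phi(d_1(\sigma))-e^k\,\Phi(d_2(\sigma))$, a strictly increasing bijection from $(0,\infty)$ onto $(0,1)$; for $c\in(0,1)$ the implied volatility $\sigma(c)$ is the unique $\sigma>0$ with $C_{\mathrm{BS}}(\sigma)=c$. The function $d_1^{-1}(x)=x+\sqrt{x^2+2k}$ is the inverse of $d_1$, and $L_2(c)=d_1^{-1}(\Phi^{-1}(c))$. The function $U_1$ is known to satisfy $U_1(c)\ge\sigma(c)$. *)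

theory Defs
  imports "HOL-Probability.Probability"
begin

definition Phi :: "real \<Rightarrow> real" where
  "Phi x = (LBINT t:{..x}. std_normal_density t)"

definition Phi_inv :: "real \<Rightarrow> real" where
  "Phi_inv p = (THE x. Phi x = p)"

definition d1 :: "real \<Rightarrow> real \<Rightarrow> real" where
  "d1 k s = - k / s + s / 2"

definition d2 :: "real \<Rightarrow> real \<Rightarrow> real" where
  "d2 k s = - k / s - s / 2"

definition C_BS :: "real \<Rightarrow> real \<Rightarrow> real" where
  "C_BS k s = Phi (d1 k s) - exp k * Phi (d2 k s)"

definition impl_vol :: "real \<Rightarrow> real \<Rightarrow> real" where
  "impl_vol k c = (THE s. s > 0 \<and> C_BS k s = c)"

definition d1_inv :: "real \<Rightarrow> real \<Rightarrow> real" where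
  "d1_inv k x = x + sqrt (x^2 + 2 * k)"

definition L2 :: "real \<Rightarrow> real \<Rightarrow> real" where
  "L2 k c = d1_inv k (Phi_inv c)"

definition U1 :: "real \<Rightarrow> real \<Rightarrow> real" where
  "U1 k c = - 2 * Phi_inv ((1 - c) / (1 + exp k))"

end

theory Submission
  imports Defs "HOL-Real_Asymp.Real_Asymp"
begin

text \<open>
  Since \<open>c = C_BS(\<sigma>) < \<Phi>(d\<^sub>1(\<sigma>))\<close> and \<open>d\<^sub>1\<^sup>-\<^sup>1\<close> is increasing, \<open>L\<^sub>2(c) \<le> \<sigma>(c)\<close>.
  The symmetry \<open>\<Phi>\<^sup>-\<^sup>1(1 - c) = -\<Phi>\<^sup>-\<^sup>1(c)\<close> together with
  \<open>d\<^sub>1\<^sup>-\<^sup>1(x) d\<^sub>1\<^sup>-\<^sup>1(-x) = 2k\<close> gives \<open>L\<^sub>2(c) L\<^sub>2(1 - c) = 2k\<close>, so every upper bound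
  \<open>U(1 - c) \<ge> \<sigma>(1 - c) \<ge> L\<^sub>2(1 - c)\<close> turns into the lower bound \<open>2k / U(1 - c) \<le> L\<^sub>2(c)\<close>.
  For \<open>U\<^sub>1\<close> one shows \<open>1 - C_BS(s) \<le> (1 + e\<^sup>k) \<Phi>(-s/2)\<close>: both sides agree at \<open>k = 0\<close>,
  and in \<open>k\<close> the left-hand side grows like \<open>e\<^sup>k \<Phi>(d\<^sub>2)\<close>, the right-hand side like
  \<open>e\<^sup>k \<Phi>(-s/2) \<ge> e\<^sup>k \<Phi>(d\<^sub>2)\<close>. Evaluated at \<open>s = \<sigma>(c)\<close> this is \<open>\<sigma>(c) \<le> U\<^sub>1(c)\<close>.
\<close>

lemma tendsto_set_integral_atMost_at_top:
  fixes f :: "real \<Rightarrow> real"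
  assumes f: "integrable lborel f"
  shows "((\<lambda>x. LBINT t:{..x}. f t) \<longlongrightarrow> integral\<^sup>L lborel f) at_top"
  unfolding set_lebesgue_integral_def
proof (rule integral_dominated_convergence_at_top[where w = "\<lambda>t. norm (f t)"])
  show "AE t in lborel. ((\<lambda>x. indicat_real {..x} t *\<^sub>R f t) \<longlongrightarrow> f t) at_top"
  proof (rule AE_I2)
    fix t :: real
    have "\<forall>\<^sub>F x in at_top. t \<le> x" by (rule eventually_ge_at_top)
    then have "\<forall>\<^sub>F x in at_top. indicat_real {..x} t *\<^sub>R f t = f t"
      by (rule eventually_mono) simp
    then show "((\<lambda>x. indicat_real {..x} t *\<^sub>R f t) \<longlongrightarrow> f t) at_top"
      by (rule tendsto_eventually)
  qed
qed (use f in \<open>auto split: split_indicator\<close>)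

lemma tendsto_set_integral_atMost_at_bot:
  fixes f :: "real \<Rightarrow> real"
  assumes f: "integrable lborel f"
  shows "((\<lambda>x. LBINT t:{..x}. f t) \<longlongrightarrow> 0) at_bot"
  unfolding filterlim_at_bot_mirror set_lebesgue_integral_def
proof -
  have "((\<lambda>x. LINT t|lborel. indicat_real {..-x} t *\<^sub>R f t) \<longlongrightarrow> LINT t::real|lborel. 0) at_top"
  proof (rule integral_dominated_convergence_at_top[where w = "\<lambda>t. norm (f t)"])
    show "AE t in lborel. ((\<lambda>x. indicat_real {..-x} t *\<^sub>R f t) \<longlongrightarrow> 0) at_top"
    proof (rule AE_I2)
      fix t :: real
      have "\<forall>\<^sub>F x in at_top. -t < x" by (rule eventually_gt_at_top)
      then have "\<forall>\<^sub>F x in at_top. indicat_real {..-x} t *\<^sub>R f t = 0"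
        by (rule eventually_mono) simp
      then show "((\<lambda>x. indicat_real {..-x} t *\<^sub>R f t) \<longlongrightarrow> 0) at_top"
        by (rule tendsto_eventually)
    qed
  qed (use f in \<open>auto split: split_indicator\<close>)
  then show "((\<lambda>x. LINT t|lborel. indicat_real {..-x} t *\<^sub>R f t) \<longlongrightarrow> 0) at_top"
    by simp
qed

lemma has_real_derivative_set_integral_atMost:
  fixes f :: "real \<Rightarrow> real"
  assumes f: "integrable lborel f" and cont: "continuous_on UNIV f"
  shows "((\<lambda>x. LBINT t:{..x}. f t) has_real_derivative f x) (at x)"
proof -
  have int: "set_integrable lborel A f" if "A \<in> sets borel" for A
    unfolding set_integrable_def using that f by (intro integrable_mult_indicator) auto
  have split: "(LBINT t:{..y}. f t) = (LBINT t:{..<x-1}. f t) + integral {x-1..y} f"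
    if "x - 1 < y" for y
  proof -
    have "{..y} = {..<x-1} \<union> {x-1..y}" using that by auto
    then have "(LBINT t:{..y}. f t) = (LBINT t:{..<x-1}. f t) + (LBINT t:{x-1..y}. f t)"
      by (simp add: set_integral_Un int ivl_disj_int)
    also have "(LBINT t:{x-1..y}. f t) = integral {x-1..y} f"
      by (rule set_borel_integral_eq_integral(2)) (simp add: int)
    finally show ?thesis .
  qed
  have "((\<lambda>y. integral {x-1..y} f) has_vector_derivative f x) (at x within {x-1..x+1})"
    by (rule integral_has_vector_derivative) (auto intro: continuous_on_subset[OF cont])
  then have "((\<lambda>y. integral {x-1..y} f) has_real_derivative f x) (at x)"
    by (simp add: has_real_derivative_iff_has_vector_derivative at_within_Icc_at)
  then have "((\<lambda>y. (LBINT t:{..<x-1}. f t) + integral {x-1..y} f) has_real_derivative f x) (at x)"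
    by (auto intro!: derivative_eq_intros)
  then show ?thesis
    by (rule has_field_derivative_transform_within_open[where S="{x-1<..}"]) (auto simp: split)
qed

lemma std_normal_density_minus [simp]: "std_normal_density (- x) = std_normal_density x"
  by (simp add: std_normal_density_def)

lemma std_normal_density_pos: "0 < std_normal_density x"
  by (simp add: normal_density_pos)

lemma Phi_has_real_derivative: "(Phi has_real_derivative std_normal_density x) (at x)"
proof -
  have "continuous_on UNIV std_normal_density"
    unfolding std_normal_density_def by (intro continuous_intros) auto
  then show ?thesis
    unfolding Phi_def[abs_def] by (intro has_real_derivative_set_integral_atMost) auto
qed

lemma isCont_Phi: "isCont Phi x"
  using Phi_has_real_derivative DERIV_isCont by blast

lemma Phi_at_top: "(Phi \<longlongrightarrow> 1) at_top"
proof -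
  have "(Phi \<longlongrightarrow> integral\<^sup>L lborel std_normal_density) at_top"
    unfolding Phi_def[abs_def] by (rule tendsto_set_integral_atMost_at_top) simp
  then show ?thesis by simp
qed

lemma Phi_at_bot: "(Phi \<longlongrightarrow> 0) at_bot"
  unfolding Phi_def[abs_def] by (rule tendsto_set_integral_atMost_at_bot) simp

lemma strict_mono_Phi: "strict_mono Phi"
proof (rule strict_monoI)
  fix x y :: real
  assume "x < y"
  then show "Phi x < Phi y"
    by (rule DERIV_pos_imp_increasing) (blast intro: Phi_has_real_derivative std_normal_density_pos)
qed

lemma Phi_less_iff [simp]: "Phi x < Phi y \<longleftrightarrow> x < y"
  by (rule strict_mono_less[OF strict_mono_Phi])

lemma Phi_le_iff [simp]: "Phi x \<le> Phi y \<longleftrightarrow> x \<le> y"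
  by (rule strict_mono_less_eq[OF strict_mono_Phi])

lemma Phi_eq_iff [simp]: "Phi x = Phi y \<longleftrightarrow> x = y"
  by (rule strict_mono_eq[OF strict_mono_Phi])

lemma Phi_pos: "0 < Phi x"
  by (rule DERIV_pos_imp_increasing_at_bot[OF _ Phi_at_bot])
     (blast intro: Phi_has_real_derivative std_normal_density_pos)

lemma Phi_minus: "Phi (- x) = 1 - Phi x"
proof -
  let ?f = "\<lambda>x. Phi (- x) + Phi x"
  have "(?f has_real_derivative std_normal_density (- y) * (- 1) + std_normal_density y) (at y)" for y
    by (intro derivative_intros DERIV_chain2[OF Phi_has_real_derivative] Phi_has_real_derivative)
  then have "(?f has_real_derivative 0) (at y)" for y
    by simp
  then have const: "?f = (\<lambda>_. ?f x)"
    using DERIV_isconst_all by blast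
  have "(?f \<longlongrightarrow> 0 + 1) at_top"
    by (intro tendsto_intros Phi_at_top filterlim_compose[OF Phi_at_bot filterlim_uminus_at_bot_at_top])
  then have "?f x = 1"
    by (subst (asm) const) (simp add: tendsto_const_iff)
  then show ?thesis by simp
qed

lemma Phi_surj:
  assumes "0 < p" "p < 1"
  obtains x where "Phi x = p"
proof -
  obtain a where a: "Phi a < p"
    using order_tendstoD(2)[OF Phi_at_bot \<open>0 < p\<close>] by (auto simp: eventually_at_bot_linorder)
  obtain b where b: "p < Phi b"
    using order_tendstoD(1)[OF Phi_at_top \<open>p < 1\<close>] by (auto simp: eventually_at_top_linorder)
  have "Phi a < Phi b"
    using a b by linarith
  then have "a \<le> b" by simp
  then show ?thesis
    using IVT'[of Phi a p b] a b isCont_Phi that by (force intro: continuous_at_imp_continuous_on)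
qed

lemma Phi_inv_Phi [simp]: "Phi_inv (Phi x) = x"
  by (simp add: Phi_inv_def)

lemma Phi_Phi_inv:
  assumes "0 < p" "p < 1"
  shows "Phi (Phi_inv p) = p"
proof -
  obtain x where "Phi x = p"
    using Phi_surj[OF assms] .
  then show ?thesis by auto
qed

lemma Phi_inv_le_iff:
  assumes "0 < p" "p < 1"
  shows "Phi_inv p \<le> y \<longleftrightarrow> p \<le> Phi y"
  using Phi_le_iff[of "Phi_inv p" y] by (simp add: Phi_Phi_inv[OF assms] del: Phi_le_iff)

lemma Phi_inv_less_iff:
  assumes "0 < p" "p < 1"
  shows "Phi_inv p < y \<longleftrightarrow> p < Phi y"
  using Phi_less_iff[of "Phi_inv p" y] by (simp add: Phi_Phi_inv[OF assms] del: Phi_less_iff)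

lemma Phi_inv_one_minus:
  assumes "0 < p" "p < 1"
  shows "Phi_inv (1 - p) = - Phi_inv p"
proof -
  have "1 - p = Phi (- Phi_inv p)"
    by (simp add: Phi_minus Phi_Phi_inv[OF assms])
  then show ?thesis by simp
qed

lemma exp_mult_std_normal_density_d2:
  assumes "s \<noteq> 0"
  shows "exp k * std_normal_density (d2 k s) = std_normal_density (d1 k s)"
proof -
  have "k - (d2 k s)\<^sup>2 / 2 = - (d1 k s)\<^sup>2 / 2"
    using assms by (simp add: d1_def d2_def power2_eq_square field_simps)
  then show ?thesis
    unfolding std_normal_density_def by (simp add: exp_add[symmetric] mult.left_commute)
qed

lemma C_BS_has_real_derivative_vol:
  assumes "0 < s"
  shows "(C_BS k has_real_derivative std_normal_density (d1 k s)) (at s)"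
proof -
  have "(C_BS k has_real_derivative
      std_normal_density (d1 k s) * (k / s\<^sup>2 + 1/2)
      - exp k * std_normal_density (d2 k s) * (k / s\<^sup>2 - 1/2)) (at s)"
    unfolding C_BS_def[abs_def] d1_def d2_def using assms
    by (auto intro!: derivative_eq_intros DERIV_chain2[OF Phi_has_real_derivative]
        simp: power2_eq_square field_simps)
  then show ?thesis
    using exp_mult_std_normal_density_d2[of s k] assms by (simp add: algebra_simps)
qed

lemma C_BS_has_real_derivative_log_strike:
  assumes "s \<noteq> 0"
  shows "((\<lambda>k. C_BS k s) has_real_derivative - exp k * Phi (d2 k s)) (at k)"
proof -
  have "((\<lambda>k. C_BS k s) has_real_derivative
      std_normal_density (d1 k s) * (- 1 / s)
      - (exp k * Phi (d2 k s) + exp k * std_normal_density (d2 k s) * (- 1 / s))) (at k)"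
    unfolding C_BS_def d1_def d2_def using assms
    by (auto intro!: derivative_eq_intros DERIV_chain2[OF Phi_has_real_derivative]
        simp: field_simps)
  then show ?thesis
    using exp_mult_std_normal_density_d2[OF assms, of k] by (simp add: algebra_simps)
qed

lemma C_BS_strict_mono:
  assumes "0 < a" "a < b"
  shows "C_BS k a < C_BS k b"
proof (rule DERIV_pos_imp_increasing[OF assms(2)])
  fix s assume "a \<le> s"
  with assms(1) have "0 < s" by simp
  then show "\<exists>y. (C_BS k has_real_derivative y) (at s) \<and> 0 < y"
    using C_BS_has_real_derivative_vol std_normal_density_pos by blast
qed

lemma C_BS_at_right_0: "0 < k \<Longrightarrow> (C_BS k \<longlongrightarrow> 0) (at_right 0)"
proof -
  assume "0 < k"
  then have "filterlim (\<lambda>s. d1 k s) at_bot (at_right 0)" "filterlim (\<lambda>s. d2 k s) at_bot (at_right 0)"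
    unfolding d1_def d2_def by real_asymp+
  then have "((\<lambda>s. Phi (d1 k s) - exp k * Phi (d2 k s)) \<longlongrightarrow> 0 - exp k * 0) (at_right 0)"
    by (intro tendsto_intros filterlim_compose[OF Phi_at_bot])
  then show ?thesis
    unfolding C_BS_def[abs_def] by simp
qed

lemma C_BS_at_top: "(C_BS k \<longlongrightarrow> 1) at_top"
proof -
  have "filterlim (\<lambda>s. d1 k s) at_top at_top" "filterlim (\<lambda>s. d2 k s) at_bot at_top"
    unfolding d1_def d2_def by real_asymp+
  then have "((\<lambda>s. Phi (d1 k s) - exp k * Phi (d2 k s)) \<longlongrightarrow> 1 - exp k * 0) at_top"
    by (intro tendsto_intros filterlim_compose[OF Phi_at_bot] filterlim_compose[OF Phi_at_top])
  then show ?thesis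
    unfolding C_BS_def[abs_def] by simp
qed

lemma ex1_C_BS_eq:
  assumes k: "0 < k" and c: "0 < c" "c < 1"
  shows "\<exists>!s. 0 < s \<and> C_BS k s = c"
proof -
  obtain a where a: "0 < a" "C_BS k a < c"
    using order_tendstoD(2)[OF C_BS_at_right_0[OF k] \<open>0 < c\<close>]
    by (auto simp: eventually_at_right_field dest: dense)
  have "\<forall>\<^sub>F s in at_top. a \<le> s \<and> c < C_BS k s"
    using eventually_ge_at_top order_tendstoD(1)[OF C_BS_at_top \<open>c < 1\<close>] by (rule eventually_conj)
  then obtain b where b: "a \<le> b" "c < C_BS k b"
    by (auto simp: eventually_at_top_linorder)
  have "continuous_on {a..b} (C_BS k)"
    using a(1) by (intro continuous_at_imp_continuous_on ballI DERIV_isCont[OF C_BS_has_real_derivative_vol]) auto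
  then obtain s where "a \<le> s" "C_BS k s = c"
    using IVT'[of "C_BS k" a c b] a b by auto
  moreover have "t = s" if "0 < t" "C_BS k t = c" "0 < s" "C_BS k s = c" for t s
    using that C_BS_strict_mono[of t s k] C_BS_strict_mono[of s t k] by (metis less_irrefl neqE)
  ultimately show ?thesis
    using a(1) by (intro ex1I[of _ s]) auto
qed

lemma
  assumes "0 < k" "0 < c" "c < 1"
  shows impl_vol_pos: "0 < impl_vol k c" and C_BS_impl_vol: "C_BS k (impl_vol k c) = c"
  using theI'[OF ex1_C_BS_eq[OF assms]] unfolding impl_vol_def by auto

lemma one_minus_C_BS_le:
  assumes k: "0 \<le> k" and s: "0 < s"
  shows "1 - C_BS k s \<le> (1 + exp k) * Phi (- s / 2)"
proof -
  define h where "h j = 1 - C_BS j s - (1 + exp j) * Phi (- s / 2)" for j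
  have h': "(h has_real_derivative exp j * (Phi (d2 j s) - Phi (- s / 2))) (at j)" for j
    unfolding h_def using s
    by (auto intro!: derivative_eq_intros C_BS_has_real_derivative_log_strike simp: algebra_simps)
  have "h k \<le> h 0"
  proof (rule DERIV_nonpos_imp_nonincreasing[OF k])
    fix j :: real
    assume "0 \<le> j"
    then have "d2 j s \<le> - s / 2"
      using s by (simp add: d2_def)
    then have "exp j * (Phi (d2 j s) - Phi (- s / 2)) \<le> 0"
      by (simp add: mult_nonneg_nonpos)
    then show "\<exists>y. (h has_real_derivative y) (at j) \<and> y \<le> 0"
      using h' by blast
  qed
  also have "h 0 = 0"
    using Phi_minus[of "s / 2"] by (simp add: h_def C_BS_def d1_def d2_def)
  finally show ?thesis
    by (simp add: h_def)
qed

lemma impl_vol_le_U1: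
  assumes k: "0 < k" and c: "0 < c" "c < 1"
  shows "impl_vol k c \<le> U1 k c"
proof -
  define p where "p = (1 - c) / (1 + exp k)"
  have e: "0 < 1 + exp k"
    using exp_gt_zero[of k] by linarith
  have "1 - c < 1 + exp k"
    using c exp_gt_zero[of k] by linarith
  then have p: "0 < p" "p < 1"
    using c e by (simp_all add: p_def)
  have "1 - c \<le> (1 + exp k) * Phi (- impl_vol k c / 2)"
    using one_minus_C_BS_le[of k "impl_vol k c"] impl_vol_pos[OF k c] C_BS_impl_vol[OF k c] k by simp
  then have "p \<le> Phi (- impl_vol k c / 2)"
    using e by (simp add: p_def divide_le_eq mult.commute)
  then have "Phi_inv p \<le> - impl_vol k c / 2"
    using Phi_inv_le_iff[OF p] by simp
  then show ?thesis
    by (simp add: U1_def p_def)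
qed

lemma d1_inv_le:
  assumes k: "0 \<le> k" and s: "0 < s" and x: "x \<le> d1 k s"
  shows "d1_inv k x \<le> s"
proof -
  have x': "x \<le> s / 2 - k / s"
    using x by (simp add: d1_def)
  then have "x\<^sup>2 + 2 * k \<le> (s - x)\<^sup>2"
    using s by (simp add: field_simps power2_eq_square)
  moreover have "0 \<le> s - x"
    using x' s k divide_nonneg_pos[OF k s] by linarith
  ultimately have "sqrt (x\<^sup>2 + 2 * k) \<le> s - x"
    by (rule real_le_lsqrt[rotated])
  then show ?thesis
    by (simp add: d1_inv_def)
qed

lemma d1_inv_pos: "0 < k \<Longrightarrow> 0 < d1_inv k x"
  using real_less_rsqrt[of "- x" "x\<^sup>2 + 2 * k"] by (simp add: d1_inv_def)

lemma d1_inv_mult_d1_inv_minus: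
  assumes "0 \<le> k"
  shows "d1_inv k x * d1_inv k (- x) = 2 * k"
proof -
  have "(sqrt (x\<^sup>2 + 2 * k))\<^sup>2 = x\<^sup>2 + 2 * k"
    using assms by simp
  then show ?thesis
    by (simp add: d1_inv_def power2_eq_square algebra_simps)
qed

lemma L2_le_impl_vol:
  assumes k: "0 < k" and c: "0 < c" "c < 1"
  shows "L2 k c \<le> impl_vol k c"
proof -
  have "0 < exp k * Phi (d2 k (impl_vol k c))"
    by (simp add: Phi_pos)
  then have "c < Phi (d1 k (impl_vol k c))"
    using C_BS_impl_vol[OF k c] by (simp add: C_BS_def)
  then have "Phi_inv c \<le> d1 k (impl_vol k c)"
    using Phi_inv_less_iff[OF c] by (blast intro: less_imp_le)
  then show ?thesis
    unfolding L2_def using k impl_vol_pos[OF k c] by (intro d1_inv_le) auto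
qed

lemma L2_mult_L2_one_minus:
  assumes "0 < k" "0 < c" "c < 1"
  shows "L2 k c * L2 k (1 - c) = 2 * k"
  using assms Phi_inv_one_minus d1_inv_mult_d1_inv_minus by (simp add: L2_def)

lemma L2_ge_of_impl_vol_le:
  assumes k: "0 < k" and c: "0 < c" "c < 1" and V: "impl_vol k (1 - c) \<le> V"
  shows "2 * k / V \<le> L2 k c"
proof -
  have pos: "0 < L2 k (1 - c)"
    unfolding L2_def using k by (rule d1_inv_pos)
  have "2 * k / V \<le> 2 * k / L2 k (1 - c)"
    using L2_le_impl_vol[of k "1 - c"] k c V pos by (intro divide_left_mono) auto
  also have "\<dots> = L2 k c"
    using L2_mult_L2_one_minus[OF k c] pos by (simp add: field_simps)
  finally show ?thesis .
qed

theorem mainTheorem10: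
  fixes k :: real and U :: "real \<Rightarrow> real"
  assumes k: "k > 0"
    and Upos: "\<forall>c\<in>{0<..<1}. U c > 0"
    and Uge: "\<forall>c\<in>{0<..<1}. U c \<ge> impl_vol k c"
  shows "(\<forall>c\<in>{0<..<1}. 2 * k / U (1 - c) \<le> L2 k c \<and> L2 k c \<le> impl_vol k c)
       \<and> (\<forall>c\<in>{0<..<1}. - k / Phi_inv (c / (1 + exp k)) \<le> L2 k c)"
proof (intro conjI ballI)
  fix c :: real assume "c \<in> {0<..<1}"
  then have c: "0 < c" "c < 1" by auto
  show "2 * k / U (1 - c) \<le> L2 k c"
    using L2_ge_of_impl_vol_le[OF k c] Uge c by simp
  show "L2 k c \<le> impl_vol k c"
    using L2_le_impl_vol[OF k c] .
  have "2 * k / U1 k (1 - c) \<le> L2 k c"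
    using L2_ge_of_impl_vol_le[OF k c impl_vol_le_U1[OF k]] c by simp
  moreover have "2 * k / U1 k (1 - c) = - k / Phi_inv (c / (1 + exp k))"
    by (simp add: U1_def divide_simps)
  ultimately show "- k / Phi_inv (c / (1 + exp k)) \<le> L2 k c"
    by simp
qed

end
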